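(* Consider the network and Algorithm 1 described in the context, with parameter $\Delta_{est}\ge\Delta$, and assume $\delta\le\frac17$. Let $0<\epsilon<1$, let $v\to u$ be a link, and let $\sigma$ be a sequence of $\frac{8\max(2S,3\Delta_{est})}{\rho}\ln\!\left(\frac{N^2}{\epsilon}\right)$ frame-pairs that is admissible with respect to $v\to u$. Then the probability that $\sigma$ does not cover $v\to u$ is at most $\frac{\epsilon}{N^2}$.
   Context: Network: a finite set of $N$ nodes; each node $u$ has a nonempty available channel set $A_u$; $S=\max_u |A_u|$. Neighborhood on a channel is symmetric; all channels have identical propagation characteristics, so $u,v$ are neighbors on $c$ iff they are neighbors on some channel and $c\in A_u\cap A_v$. $\deg(u,c)$ is the number of neighbors of $u$ on $c$, $\Delta=\max_u\max_{c\in A_u}\deg(u,c)$. For neighbors $v,u$ the link $v\to u$ has span $\mathrm{span}(v\to u)=A_u\cap A_v$ and span-ratio $|\mathrm{span}(v\to u)|/|A_u|$; $\rho$ is the minimum span-ratio over all links. A node operates on one channel at a time, cannot transmit and receive simultaneously; a node listening on $c$ throughout a real-time interval $I$ receives a message transmitted on $c$ during $I$ by a neighbor $v$ provided no other neighbor on $c$ transmits on $c$ during $I$; no collision detection. Clocks: each node $u$ has a clock $C_u$ with $(1-\delta)\Delta t\le C_u(t+\Delta t)-C_u(t)\le(1+\delta)\Delta t$ for all real $t$, $\Delta t\ge0$; arbitrary offsets. Algorithm 1 (input: positive integer $\Delta_{est}$, upper bound on $\Delta$ known to all nodes): each node starts at an arbitrary real time and partitions local time into consecutive frames of local length $L$,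 each split into three slots of local length $L/3$. At the start of each frame, node $u$ picks $c$ uniformly at random from $A_u$, and with probability $p_u=\min(\frac12,\frac{|A_u|}{3\Delta_{est}})$ transmits on $c$ during each of the three slots a message with its identity and $A_u$; otherwise it listens on $c$ during the entire frame, recording each sender $v$ (with set $A$) as a neighbor with common channels $A\cap A_u$. Random choices are independent across frames and nodes. Definitions: for a frame $f$, $\mathrm{node}(f)$ is the node owning it. A pair $(f,g)$ is aligned if some slot of $f$ lies completely within $g$ in real time. $\mathrm{overlap}(g,w)$ is the set of frames of $w$ overlapping $g$ in real time, and $\mathrm{overlapAll}(g)$ is the set of all frames (of all nodes) overlapping $g$. $(f,g)$ with $\mathrm{node}(f)=v$, $\mathrm{node}(g)=u$ covers $v\to u$ on $c$ if $v$ transmits on $c$ during $f$, $u$ listens on $c$ during $g$, and no neighbor $w\ne v$ of $u$ on $c$ transmits on $c$ during any frame in $\mathrm{overlap}(g,w)$; it covers $v\to u$ if it does so on some $c\in\mathrm{span}(v\to u)$. $(f,g)$ precedes $(p,q)$ if $\mathrm{node}(f)=\mathrm{node}(p)$, $\mathrm{node}(g)=\mathrm{node}(q)$, $f$ starts before $p$ and $g$ starts before $q$. A sequence $(f_1,g_1),\dots,(f_M,g_M)$ of frame-pairs is admissible with respect to $v\to u$ if $\mathrm{node}(f_k)=v$ and $\mathrm{node}(g_k)=u$ for all $k$, $(f_k,g_k)$ precedes $(f_{k+1},g_{k+1})$ for $k<M$, each $(f_k,g_k)$ is aligned, and $\mathrm{overlapAll}(g_k)\cap\mathrm{overlapAll}(g_{k+1})=\emptyset$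 for $k<M$. A sequence covers $v\to u$ if some frame-pair in it covers $v\to u$. *)

theory Defs
  imports "HOL-Probability.Probability"
begin

(* Frames are identified by (owner node, index k); frame k of node u occupies local
   times [C u (s u) + k L, C u (s u) + (k+1) L).  Outcomes of the algorithm:
   omega (u,k) = (channel chosen, transmits?) for frame k of node u. *)

type_synonym 'n frame = "'n \<times> nat"

definition nbc :: "('n \<Rightarrow> 'c set) \<Rightarrow> ('n \<Rightarrow> 'n \<Rightarrow> bool) \<Rightarrow> 'n \<Rightarrow> 'n \<Rightarrow> 'c \<Rightarrow> bool" where
  "nbc A nb u w c \<longleftrightarrow> nb u w \<and> c \<in> A u \<inter> A w"

definition neighbors :: "('n \<Rightarrow> 'c set) \<Rightarrow> ('n \<Rightarrow> 'n \<Rightarrow> bool) \<Rightarrow> 'n \<Rightarrow> 'n \<Rightarrow> bool" where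
  "neighbors A nb u w \<longleftrightarrow> (\<exists>c. nbc A nb u w c)"

definition deg :: "('n \<Rightarrow> 'c set) \<Rightarrow> ('n \<Rightarrow> 'n \<Rightarrow> bool) \<Rightarrow> 'n \<Rightarrow> 'c \<Rightarrow> nat" where
  "deg A nb u c = card {w. nbc A nb u w c}"

definition Delta :: "('n::finite \<Rightarrow> 'c set) \<Rightarrow> ('n \<Rightarrow> 'n \<Rightarrow> bool) \<Rightarrow> nat" where
  "Delta A nb = Max {deg A nb u c | u c. c \<in> A u}"

definition Smax :: "('n::finite \<Rightarrow> 'c set) \<Rightarrow> nat" where
  "Smax A = Max (range (\<lambda>u. card (A u)))"

definition span :: "('n \<Rightarrow> 'c set) \<Rightarrow> 'n \<Rightarrow> 'n \<Rightarrow> 'c set" where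
  "span A v u = A u \<inter> A v"

definition span_ratio :: "('n \<Rightarrow> 'c set) \<Rightarrow> 'n \<Rightarrow> 'n \<Rightarrow> real" where
  "span_ratio A v u = real (card (span A v u)) / real (card (A u))"

definition rho :: "('n \<Rightarrow> 'c set) \<Rightarrow> ('n \<Rightarrow> 'n \<Rightarrow> bool) \<Rightarrow> real" where
  "rho A nb = Min {span_ratio A v u | v u. neighbors A nb v u}"

definition frame_time :: "('n \<Rightarrow> real \<Rightarrow> real) \<Rightarrow> ('n \<Rightarrow> real) \<Rightarrow> real \<Rightarrow> 'n frame \<Rightarrow> real set" where
  "frame_time C s L f = {t. C (fst f) (s (fst f)) + real (snd f) * L \<le> C (fst f) t \<and>
                            C (fst f) t < C (fst f) (s (fst f)) + (real (snd f) + 1) * L}"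

definition slot_time :: "('n \<Rightarrow> real \<Rightarrow> real) \<Rightarrow> ('n \<Rightarrow> real) \<Rightarrow> real \<Rightarrow> 'n frame \<Rightarrow> nat \<Rightarrow> real set" where
  "slot_time C s L f j = {t. C (fst f) (s (fst f)) + real (snd f) * L + real j * (L / 3) \<le> C (fst f) t \<and>
                             C (fst f) t < C (fst f) (s (fst f)) + real (snd f) * L + (real j + 1) * (L / 3)}"

definition aligned :: "('n \<Rightarrow> real \<Rightarrow> real) \<Rightarrow> ('n \<Rightarrow> real) \<Rightarrow> real \<Rightarrow> 'n frame \<Rightarrow> 'n frame \<Rightarrow> bool" where
  "aligned C s L f g \<longleftrightarrow> (\<exists>j<3. slot_time C s L f j \<subseteq> frame_time C s L g)"

definition overlap :: "('n \<Rightarrow> real \<Rightarrow> real) \<Rightarrow> ('n \<Rightarrow> real) \<Rightarrow> real \<Rightarrow> 'n frame \<Rightarrow> 'n \<Rightarrow> 'n frame set" where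
  "overlap C s L g w = {h. fst h = w \<and> frame_time C s L h \<inter> frame_time C s L g \<noteq> {}}"

definition overlapAll :: "('n \<Rightarrow> real \<Rightarrow> real) \<Rightarrow> ('n \<Rightarrow> real) \<Rightarrow> real \<Rightarrow> 'n frame \<Rightarrow> 'n frame set" where
  "overlapAll C s L g = {h. frame_time C s L h \<inter> frame_time C s L g \<noteq> {}}"

(* (f,g) precedes (p,q): same nodes, f starts before p, g starts before q
   (for frames of the same node, starting earlier = smaller index) *)
definition precedes :: "'n frame \<times> 'n frame \<Rightarrow> 'n frame \<times> 'n frame \<Rightarrow> bool" where
  "precedes fg pq \<longleftrightarrow> fst (fst fg) = fst (fst pq) \<and> fst (snd fg) = fst (snd pq) \<and>
                       snd (fst fg) < snd (fst pq) \<and> snd (snd fg) < snd (snd pq)"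

definition admissible :: "('n \<Rightarrow> real \<Rightarrow> real) \<Rightarrow> ('n \<Rightarrow> real) \<Rightarrow> real \<Rightarrow> 'n \<Rightarrow> 'n \<Rightarrow>
    (nat \<Rightarrow> 'n frame \<times> 'n frame) \<Rightarrow> nat \<Rightarrow> bool" where
  "admissible C s L v u \<sigma> M \<longleftrightarrow>
     (\<forall>k<M. fst (fst (\<sigma> k)) = v \<and> fst (snd (\<sigma> k)) = u \<and> aligned C s L (fst (\<sigma> k)) (snd (\<sigma> k))) \<and>
     (\<forall>k. k + 1 < M \<longrightarrow> precedes (\<sigma> k) (\<sigma> (k + 1)) \<and>
         overlapAll C s L (snd (\<sigma> k)) \<inter> overlapAll C s L (snd (\<sigma> (k + 1))) = {})"

definition transmits :: "('n frame \<Rightarrow> 'c \<times> bool) \<Rightarrow> 'n frame \<Rightarrow> 'c \<Rightarrow> bool" where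
  "transmits \<omega> f c \<longleftrightarrow> \<omega> f = (c, True)"

definition listens :: "('n frame \<Rightarrow> 'c \<times> bool) \<Rightarrow> 'n frame \<Rightarrow> 'c \<Rightarrow> bool" where
  "listens \<omega> f c \<longleftrightarrow> \<omega> f = (c, False)"

definition covers_on :: "('n \<Rightarrow> 'c set) \<Rightarrow> ('n \<Rightarrow> 'n \<Rightarrow> bool) \<Rightarrow> ('n \<Rightarrow> real \<Rightarrow> real) \<Rightarrow> ('n \<Rightarrow> real) \<Rightarrow> real \<Rightarrow>
    ('n frame \<Rightarrow> 'c \<times> bool) \<Rightarrow> 'n frame \<Rightarrow> 'n frame \<Rightarrow> 'c \<Rightarrow> bool" where
  "covers_on A nb C s L \<omega> f g c \<longleftrightarrow>
     transmits \<omega> f c \<and> listens \<omega> g c \<and>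
     (\<forall>w. w \<noteq> fst f \<and> nbc A nb (fst g) w c \<longrightarrow> (\<forall>h\<in>overlap C s L g w. \<not> transmits \<omega> h c))"

definition covers :: "('n \<Rightarrow> 'c set) \<Rightarrow> ('n \<Rightarrow> 'n \<Rightarrow> bool) \<Rightarrow> ('n \<Rightarrow> real \<Rightarrow> real) \<Rightarrow> ('n \<Rightarrow> real) \<Rightarrow> real \<Rightarrow>
    ('n frame \<Rightarrow> 'c \<times> bool) \<Rightarrow> 'n frame \<Rightarrow> 'n frame \<Rightarrow> bool" where
  "covers A nb C s L \<omega> f g \<longleftrightarrow> (\<exists>c\<in>span A (fst f) (fst g). covers_on A nb C s L \<omega> f g c)"

definition seq_covers :: "('n \<Rightarrow> 'c set) \<Rightarrow> ('n \<Rightarrow> 'n \<Rightarrow> bool) \<Rightarrow> ('n \<Rightarrow> real \<Rightarrow> real) \<Rightarrow> ('n \<Rightarrow> real) \<Rightarrow> real \<Rightarrow>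
    ('n frame \<Rightarrow> 'c \<times> bool) \<Rightarrow> (nat \<Rightarrow> 'n frame \<times> 'n frame) \<Rightarrow> nat \<Rightarrow> bool" where
  "seq_covers A nb C s L \<omega> \<sigma> M \<longleftrightarrow> (\<exists>k<M. covers A nb C s L \<omega> (fst (\<sigma> k)) (snd (\<sigma> k)))"

definition p_tx :: "('n \<Rightarrow> 'c set) \<Rightarrow> nat \<Rightarrow> 'n \<Rightarrow> real" where
  "p_tx A Dest u = min (1/2) (real (card (A u)) / (3 * real Dest))"

definition frame_pmf :: "('n \<Rightarrow> 'c set) \<Rightarrow> nat \<Rightarrow> 'n \<Rightarrow> ('c \<times> bool) pmf" where
  "frame_pmf A Dest u = pair_pmf (pmf_of_set (A u)) (bernoulli_pmf (p_tx A Dest u))"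

definition alg_space :: "('n \<Rightarrow> 'c set) \<Rightarrow> nat \<Rightarrow> ('n frame \<Rightarrow> 'c \<times> bool) measure" where
  "alg_space A Dest = PiM UNIV (\<lambda>f. measure_pmf (frame_pmf A Dest (fst f)))"

end

theory Submission
  imports Defs
begin

text \<open>
  Fix a frame pair (f, g) of the link v \<rightarrow> u and a channel c in its span. As the clock drift is at most 1/3, each neighbour has at most
  three frames overlapping g, so at most 3 (Dest - 1) frames can interfere, each transmitting on c
  with probability at most 1 / (3 Dest). With m = max (2 S) (3 Dest) the three requirements have
  probabilities at least 1/m, 1 / (2 |A u|) and 1/4, and summing over the span shows that the pair
  covers the link with probability at least \<rho> / (8 m).

  Coverage by a pair depends only on f, g and the interfering frames. For an admissible sequence
  these frame sets are pairwise disjoint: for non-consecutive pairs because a frame overlapping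
  both g_k and g_l also overlaps g_(k+1). Hence the coverage events are independent, and
  the probability that none occurs is at most (1 - \<rho> / (8 m))^M \<le> exp (- \<rho> M / (8 m)) \<le> \<epsilon> / N^2.
\<close>

section \<open>Frames under drifting clocks\<close>

lemma admissible_owners:
  assumes "admissible C s L v u \<sigma> M" "k < M"
  shows "fst (fst (\<sigma> k)) = v" "fst (snd (\<sigma> k)) = u"
  using assms by (simp_all add: admissible_def)

lemma admissible_indices_increasing:
  assumes adm: "admissible C s L v u \<sigma> M" and "k < l" "l < M"
  shows "snd (fst (\<sigma> k)) < snd (fst (\<sigma> l)) \<and> snd (snd (\<sigma> k)) < snd (snd (\<sigma> l))"
  using assms(2,3)
proof (induction l)
  case (Suc l)
  have "precedes (\<sigma> l) (\<sigma> (Suc l))"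
    using adm Suc.prems(2) by (simp add: admissible_def)
  with Suc show ?case
    by (cases "k = l") (force simp: precedes_def)+
qed simp

locale drifting_clocks =
  fixes C :: "'n \<Rightarrow> real \<Rightarrow> real" and \<delta> :: real
  assumes clock_rate: "\<And>w t dt. dt \<ge> 0 \<Longrightarrow>
      (1 - \<delta>) * dt \<le> C w (t + dt) - C w t \<and> C w (t + dt) - C w t \<le> (1 + \<delta>) * dt"
    and drift_lt_1: "\<delta> < 1"
begin

lemma clock_increment_bounds:
  assumes "t \<le> t'"
  shows "(1 - \<delta>) * (t' - t) \<le> C w t' - C w t" and "C w t' - C w t \<le> (1 + \<delta>) * (t' - t)"
  using clock_rate[of "t' - t" w t] assms by simp_all

lemma clock_strict_mono: "strict_mono (C w)"
proof (rule strict_monoI)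
  fix t t' :: real
  assume "t < t'"
  then have "0 < (1 - \<delta>) * (t' - t)"
    using drift_lt_1 by simp
  then show "C w t < C w t'"
    using clock_increment_bounds(1)[of t t' w] \<open>t < t'\<close> by linarith
qed

lemma clock_lipschitz: "(1 + \<delta>)-lipschitz_on UNIV (C w)"
proof (rule lipschitz_onI)
  have increment: "\<bar>C w t' - C w t\<bar> \<le> (1 + \<delta>) * (t' - t)" if "t \<le> t'" for t t'
  proof -
    have "0 \<le> (1 - \<delta>) * (t' - t)"
      using drift_lt_1 that by simp
    then show ?thesis
      using clock_increment_bounds[OF that, of w] by linarith
  qed
  show "0 \<le> 1 + \<delta>"
    using increment[of 0 1] by simp
  show "dist (C w t) (C w t') \<le> (1 + \<delta>) * dist t t'" for t t'
    using increment[of t t'] increment[of t' t]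
    by (cases "t \<le> t'") (simp_all add: dist_real_def abs_minus_commute)
qed

lemma clock_continuous: "continuous_on S (C w)"
  using lipschitz_on_continuous_on[OF lipschitz_on_subset[OF clock_lipschitz]] by blast

lemma overlap_indices_close:
  assumes drift: "\<delta> \<le> 1/3" and L: "L > 0"
    and t1: "t1 \<in> frame_time C s L (w, k1)" "t1 \<in> frame_time C s L g"
    and t2: "t2 \<in> frame_time C s L (w, k2)" "t2 \<in> frame_time C s L g"
  shows "k2 \<le> k1 + 2"
proof (rule ccontr)
  assume "\<not> k2 \<le> k1 + 2"
  then have "(real k1 + 3) * L \<le> real k2 * L"
    using L by (intro mult_right_mono) auto
  with t1(1) t2(1) have far: "C w t2 - C w t1 > 2 * L"
    by (simp add: frame_time_def algebra_simps)
  then have "C w t1 < C w t2"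
    using L by linarith
  then have "t1 < t2"
    by (simp add: strict_mono_less[OF clock_strict_mono])
  from t1(2) t2(2) have near: "C (fst g) t2 - C (fst g) t1 < L"
    by (simp add: frame_time_def algebra_simps)
  have "\<delta> * (t2 - t1) \<le> (t2 - t1) / 3"
    using drift \<open>t1 < t2\<close> by (simp add: mult_right_mono)
  then show False
    using far near clock_increment_bounds[of t1 t2 w] clock_increment_bounds[of t1 t2 "fst g"]
      \<open>t1 < t2\<close> L by (simp add: algebra_simps)
qed

lemma finite_card_overlap:
  assumes "\<delta> \<le> 1/3" "L > 0"
  shows "finite (overlap C s L g w) \<and> card (overlap C s L g w) \<le> 3"
proof -
  define K where "K = {k. frame_time C s L (w, k) \<inter> frame_time C s L g \<noteq> {}}"
  have overlap_eq: "overlap C s L g w = Pair w ` K"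
    by (auto simp: overlap_def K_def image_def)
  have close: "k' \<le> k + 2" if "k \<in> K" "k' \<in> K" for k k'
    using that overlap_indices_close[OF assms] unfolding K_def by blast
  show ?thesis
  proof (cases "K = {}")
    case False
    then obtain k0 where "k0 \<in> K"
      by blast
    then have "finite K"
      using close by (intro finite_subset[of K "{..k0 + 2}"]) auto
    with False have "K \<subseteq> {Min K..Min K + 2}"
      using close[OF Min_in] by auto
    then have "card K \<le> 3"
      using card_mono[of "{Min K..Min K + 2}" K] by simp
    then show ?thesis
      using \<open>finite K\<close> card_image_le[of K "Pair w"] by (simp add: overlap_eq)
  qed (simp add: overlap_eq)
qed

text \<open>By the intermediate value theorem, h is still running at the real time when g2 starts.\<close>

lemma overlapAll_between:
  assumes L: "L > 0"
    and owners: "fst g1 = fst g2" "fst g3 = fst g2"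
    and indices: "snd g1 < snd g2" "snd g2 < snd g3"
    and h: "h \<in> overlapAll C s L g1" "h \<in> overlapAll C s L g3"
  shows "h \<in> overlapAll C s L g2"
proof -
  obtain t1 t3 where t1: "t1 \<in> frame_time C s L h" "t1 \<in> frame_time C s L g1"
    and t3: "t3 \<in> frame_time C s L h" "t3 \<in> frame_time C s L g3"
    using h by (auto simp: overlapAll_def)
  define w where "w = fst g2"
  define y where "y = C w (s w) + real (snd g2) * L"
  have "(real (snd g1) + 1) * L \<le> real (snd g2) * L" "(real (snd g2) + 1) * L \<le> real (snd g3) * L"
    using indices L by (simp_all add: mult_right_mono)
  then have before: "C w t1 \<le> y" and after: "y + L \<le> C w t3"
    using t1(2) t3(2) owners by (simp_all add: frame_time_def y_def w_def algebra_simps)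
  then have "C w t1 \<le> C w t3"
    using L by linarith
  then have "t1 \<le> t3"
    by (simp add: strict_mono_less_eq[OF clock_strict_mono])
  then obtain t where t: "t1 \<le> t" "t \<le> t3" "C w t = y"
    using IVT'[OF before _ \<open>t1 \<le> t3\<close> clock_continuous] after L by auto
  have "t \<in> frame_time C s L g2"
    using t L by (simp add: frame_time_def y_def w_def)
  moreover have "t \<in> frame_time C s L h"
  proof -
    have "C (fst h) t1 \<le> C (fst h) t" "C (fst h) t \<le> C (fst h) t3"
      using t(1,2) by (simp_all add: strict_mono_less_eq[OF clock_strict_mono])
    then show ?thesis
      using t1(1) t3(1) unfolding frame_time_def by auto
  qed
  ultimately show ?thesis
    by (auto simp: overlapAll_def)
qed

lemma admissible_overlapAll_disjoint:
  assumes L: "L > 0" and adm: "admissible C s L v u \<sigma> M" and "k < l" "l < M"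
  shows "overlapAll C s L (snd (\<sigma> k)) \<inter> overlapAll C s L (snd (\<sigma> l)) = {}"
proof (cases "l = k + 1")
  case True
  then show ?thesis
    using adm \<open>l < M\<close> by (simp add: admissible_def)
next
  case False
  with \<open>k < l\<close> have "k + 1 < l"
    by simp
  have "h \<in> overlapAll C s L (snd (\<sigma> (k + 1)))"
    if "h \<in> overlapAll C s L (snd (\<sigma> k))" "h \<in> overlapAll C s L (snd (\<sigma> l))" for h
    using overlapAll_between[OF L _ _ _ _ that]
      admissible_owners[OF adm] admissible_indices_increasing[OF adm] \<open>k + 1 < l\<close> \<open>l < M\<close>
    by simp
  moreover have "overlapAll C s L (snd (\<sigma> k)) \<inter> overlapAll C s L (snd (\<sigma> (k + 1))) = {}"
    using adm \<open>k + 1 < l\<close> \<open>l < M\<close> by (simp add: admissible_def)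
  ultimately show ?thesis
    by blast
qed

end

section \<open>Elementary bounds and independence in product spaces\<close>

lemma power_one_minus_inverse_ge_quarter:
  assumes "D \<ge> 1"
  shows "(1 - 1 / (3 * real D)) ^ (3 * D - 3) \<ge> 1/4"
proof -
  define m where "m = 3 * D - 1"
  have "m \<ge> 2"
    using assms by (simp add: m_def)
  have base: "1 - 1 / (3 * real D) = 1 / (1 + 1 / real m)"
    using assms \<open>m \<ge> 2\<close> by (simp add: m_def of_nat_diff field_simps)
  have "(1 + 1 / real m) ^ m \<le> exp 1"
    using exp_ge_one_plus_x_over_n_power_n[of m 1] \<open>m \<ge> 2\<close> by simp
  also have "\<dots> \<le> 4"
    using exp_le by simp
  finally have "1/4 \<le> 1 / (1 + 1 / real m) ^ m"
    by (simp add: field_simps add_pos_nonneg)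
  also have "\<dots> = (1 - 1 / (3 * real D)) ^ m"
    by (simp add: base power_one_over)
  also have "\<dots> \<le> (1 - 1 / (3 * real D)) ^ (3 * D - 3)"
    using assms by (intro power_decreasing) (auto simp: m_def field_simps)
  finally show ?thesis .
qed

lemma prod_one_minus_ge_quarter:
  fixes p :: "'a \<Rightarrow> real"
  assumes "finite H" "card H \<le> 3 * D - 3" "D \<ge> 1"
    and p: "\<And>h. h \<in> H \<Longrightarrow> 0 \<le> p h \<and> p h \<le> 1 / (3 * real D)"
  shows "(\<Prod>h\<in>H. 1 - p h) \<ge> 1/4"
proof -
  define a where "a = 1 - 1 / (3 * real D)"
  have "0 \<le> a" "a \<le> 1"
    using \<open>D \<ge> 1\<close> by (auto simp: a_def field_simps)
  have "1/4 \<le> a ^ (3 * D - 3)"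
    unfolding a_def by (rule power_one_minus_inverse_ge_quarter[OF \<open>D \<ge> 1\<close>])
  also have "\<dots> \<le> a ^ card H"
    by (rule power_decreasing[OF assms(2) \<open>0 \<le> a\<close> \<open>a \<le> 1\<close>])
  also have "\<dots> = (\<Prod>h\<in>H. a)"
    by simp
  also have "\<dots> \<le> (\<Prod>h\<in>H. 1 - p h)"
    using \<open>0 \<le> a\<close> p by (intro prod_mono) (simp add: a_def)
  finally show ?thesis .
qed

lemma power_one_minus_le_inverse:
  assumes "0 \<le> q" "q \<le> 1" "x > 0" "ln x \<le> q * real M"
  shows "(1 - q) ^ M \<le> 1 / x"
proof -
  have "(1 - q) ^ M \<le> exp (- q) ^ M"
    using assms(2) exp_ge_add_one_self[of "- q"] by (intro power_mono) auto
  also have "\<dots> = exp (- (q * real M))"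
    by (simp add: exp_of_nat_mult[symmetric] mult.commute)
  also have "\<dots> \<le> exp (- ln x)"
    using assms(4) by simp
  also have "\<dots> = 1 / x"
    using assms(3) by (simp add: exp_minus inverse_eq_divide)
  finally show ?thesis .
qed

lemma (in product_prob_space) measure_PiM_Collect:
  assumes "J \<subseteq> I" "finite J" "\<And>i. i \<in> J \<Longrightarrow> X i \<in> sets (M i)"
  shows "measure (Pi\<^sub>M I M) {x \<in> space (Pi\<^sub>M I M). \<forall>i\<in>J. x i \<in> X i} = (\<Prod>i\<in>J. measure (M i) (X i))"
  using emeasure_PiM_Collect[OF assms]
  unfolding emeasure_eq_measure M.emeasure_eq_measure
  by (simp add: prod_ennreal measure_nonneg prod_nonneg)

lemma (in product_prob_space) indep_vars_PiM_components:
  "prob_space.indep_vars (Pi\<^sub>M I M) M (\<lambda>i x. x i) I"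
proof (cases "I = {}")
  case True
  then show ?thesis
    unfolding P.indep_vars_def P.indep_sets_def by blast
next
  case False
  have "distr (Pi\<^sub>M I M) (Pi\<^sub>M I M) (\<lambda>x. \<lambda>i\<in>I. x i) = Pi\<^sub>M I M"
    by (subst distr_cong[of _ _ _ _ _ "\<lambda>x. x"]) (auto simp: space_PiM)
  also have "\<dots> = Pi\<^sub>M I (\<lambda>i. distr (Pi\<^sub>M I M) (M i) (\<lambda>x. x i))"
    by (rule PiM_cong) (simp_all add: PiM_component)
  finally show ?thesis
    using False by (subst P.indep_vars_iff_distr_eq_PiM') auto
qed

lemma (in product_prob_space) measure_PiM_none_of_local_events:
  assumes "finite K" and disj: "disjoint_family_on J K" and J: "\<And>k. k \<in> K \<Longrightarrow> J k \<subseteq> I"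
    and meas: "\<And>k. k \<in> K \<Longrightarrow> Measurable.pred (Pi\<^sub>M (J k) M) (E k)"
    and local: "\<And>k x. k \<in> K \<Longrightarrow> E k (restrict x (J k)) = E k x"
  shows "measure (Pi\<^sub>M I M) {x \<in> space (Pi\<^sub>M I M). \<forall>k\<in>K. \<not> E k x}
    = (\<Prod>k\<in>K. measure (Pi\<^sub>M I M) {x \<in> space (Pi\<^sub>M I M). \<not> E k x})"
proof (cases "K = {}")
  case True
  then show ?thesis
    using P.prob_space by simp
next
  case False
  define B where "B k = {x \<in> space (Pi\<^sub>M (J k) M). \<not> E k x}" for k
  have ind: "P.indep_vars (\<lambda>k. Pi\<^sub>M (J k) M) (\<lambda>k x. restrict x (J k)) K"
    using P.indep_vars_restrict[OF indep_vars_PiM_components J disj] by simp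
  have B: "B k \<in> sets (Pi\<^sub>M (J k) M)" if "k \<in> K" for k
    using meas[OF that] unfolding B_def by measurable
  have preimage: "(\<lambda>x. restrict x (J k)) -` B k \<inter> space (Pi\<^sub>M I M) = {x \<in> space (Pi\<^sub>M I M). \<not> E k x}"
    if "k \<in> K" for k
    using local[OF that] J[OF that] by (auto simp: B_def space_PiM)
  have "{x \<in> space (Pi\<^sub>M I M). \<forall>k\<in>K. \<not> E k x} = (\<Inter>k\<in>K. (\<lambda>x. restrict x (J k)) -` B k \<inter> space (Pi\<^sub>M I M))"
    using False preimage by auto
  then show ?thesis
    using P.indep_varsD[OF ind False \<open>finite K\<close> subset_refl B] preimage by simp
qed

lemma measure_pmf_Compl_singleton: "measure (measure_pmf p) (- {x}) = 1 - pmf p x"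
  using measure_pmf.prob_compl[of "{x}" p] by (simp add: measure_pmf_single Compl_eq_Diff_UNIV)

section \<open>Coverage probability under Algorithm 1\<close>

locale algorithm1 = drifting_clocks C \<delta>
  for C :: "'n::finite \<Rightarrow> real \<Rightarrow> real" and \<delta> :: real +
  fixes A :: "'n \<Rightarrow> 'c set" and nb :: "'n \<Rightarrow> 'n \<Rightarrow> bool" and s :: "'n \<Rightarrow> real"
    and L :: real and Dest :: nat
  assumes finite_channels: "finite (A w)" and channels_nonempty: "A w \<noteq> {}"
    and nb_sym: "nb w x \<longleftrightarrow> nb x w" and nb_irrefl: "\<not> nb w w"
    and drift_le_third: "\<delta> \<le> 1/3" and L_pos: "0 < L"
    and Dest_pos: "0 < Dest" and Delta_le_Dest: "Delta A nb \<le> Dest"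
begin

lemma card_channels_pos: "0 < card (A w)"
  using finite_channels channels_nonempty by (simp add: card_gt_0_iff)

lemma card_channels_le_Smax: "card (A w) \<le> Smax A"
  unfolding Smax_def by (rule Max_ge) auto

lemma deg_le_Dest:
  assumes "c \<in> A w"
  shows "deg A nb w c \<le> Dest"
proof -
  have "{deg A nb w c |w c. c \<in> A w} \<subseteq> (\<lambda>(w, c). deg A nb w c) ` (SIGMA w:UNIV. A w)"
    by auto
  moreover have "finite (SIGMA w:UNIV. A w)"
    using finite_channels by (intro finite_SigmaI) auto
  ultimately have "finite {deg A nb w c |w c. c \<in> A w}"
    by (rule finite_surj[rotated])
  then have "deg A nb w c \<le> Delta A nb"
    unfolding Delta_def using assms by (intro Max_ge) auto
  then show ?thesis
    using Delta_le_Dest by simp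
qed

lemma rho_pos_le_span_ratio:
  assumes "neighbors A nb v u"
  shows "0 < rho A nb" "rho A nb \<le> span_ratio A v u"
proof -
  define R where "R = {span_ratio A v u |v u. neighbors A nb v u}"
  have "finite R"
    unfolding R_def by (rule finite_surj[of UNIV _ "\<lambda>(v, u). span_ratio A v u"]) auto
  have "0 < span_ratio A v' u'" if "neighbors A nb v' u'" for v' u'
  proof -
    from that obtain c where "c \<in> span A v' u'"
      by (auto simp: neighbors_def nbc_def span_def)
    then have "0 < card (span A v' u')"
      using finite_channels by (auto simp: span_def card_gt_0_iff)
    then show ?thesis
      using card_channels_pos[of u'] by (simp add: span_ratio_def)
  qed
  moreover have "R \<noteq> {}"
    using assms by (auto simp: R_def)
  ultimately show "0 < rho A nb"
    using \<open>finite R\<close> unfolding rho_def R_def[symmetric] by (auto simp: Min_gr_iff R_def)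
  show "rho A nb \<le> span_ratio A v u"
    unfolding rho_def R_def[symmetric] using \<open>finite R\<close> assms by (auto simp: R_def intro: Min_le)
qed

lemma span_ratio_le_1: "span_ratio A v u \<le> 1"
proof -
  have "card (span A v u) \<le> card (A u)"
    using finite_channels by (intro card_mono) (auto simp: span_def)
  then show ?thesis
    using card_channels_pos[of u] by (simp add: span_ratio_def)
qed

lemma pmf_frame_pmf:
  "pmf (frame_pmf A Dest w) (c, b) =
     indicator (A w) c / real (card (A w)) * (if b then p_tx A Dest w else 1 - p_tx A Dest w)"
proof -
  have "0 \<le> p_tx A Dest w" "p_tx A Dest w \<le> 1"
    by (auto simp: p_tx_def)
  then show ?thesis
    using finite_channels channels_nonempty by (cases b) (simp_all add: frame_pmf_def pmf_pair)
qed

lemma pmf_transmit_le: "pmf (frame_pmf A Dest w) (c, True) \<le> 1 / (3 * real Dest)"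
proof -
  have "pmf (frame_pmf A Dest w) (c, True) \<le> p_tx A Dest w / real (card (A w))"
    using card_channels_pos[of w] by (auto simp: pmf_frame_pmf indicator_def p_tx_def)
  also have "\<dots> \<le> 1 / (3 * real Dest)"
  proof -
    have "p_tx A Dest w \<le> real (card (A w)) / (3 * real Dest)"
      by (simp add: p_tx_def)
    then show ?thesis
      using card_channels_pos[of w] Dest_pos by (simp add: field_simps)
  qed
  finally show ?thesis .
qed

lemma pmf_transmit_ge:
  assumes "c \<in> A w"
  shows "1 / real (max (2 * Smax A) (3 * Dest)) \<le> pmf (frame_pmf A Dest w) (c, True)"
proof -
  have "real (2 * card (A w)) \<le> real (max (2 * Smax A) (3 * Dest))"
    "real (3 * Dest) \<le> real (max (2 * Smax A) (3 * Dest))"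
    using card_channels_le_Smax[of w] by (simp_all only: of_nat_le_iff)
  then show ?thesis
    using assms card_channels_pos[of w] Dest_pos
    by (auto simp: pmf_frame_pmf p_tx_def min_def frac_le field_simps)
qed

lemma pmf_listen_ge:
  assumes "c \<in> A w"
  shows "1 / (2 * real (card (A w))) \<le> pmf (frame_pmf A Dest w) (c, False)"
  using assms card_channels_pos[of w] by (auto simp: pmf_frame_pmf p_tx_def field_simps)

definition interferers :: "'n \<Rightarrow> 'n frame \<Rightarrow> 'c \<Rightarrow> 'n frame set" where
  "interferers v g c = (\<Union>w\<in>{w. w \<noteq> v \<and> nbc A nb (fst g) w c}. overlap C s L g w)"

definition coverage_frames :: "'n frame \<Rightarrow> 'n frame \<Rightarrow> 'n frame set" where
  "coverage_frames f g = insert f (insert g (\<Union>c\<in>span A (fst f) (fst g). interferers (fst f) g c))"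

lemma covers_iff_interferers:
  "covers A nb C s L \<omega> f g \<longleftrightarrow> (\<exists>c\<in>span A (fst f) (fst g).
     \<omega> f = (c, True) \<and> \<omega> g = (c, False) \<and> (\<forall>h\<in>interferers (fst f) g c. \<omega> h \<noteq> (c, True)))"
  by (auto simp: covers_def covers_on_def transmits_def listens_def interferers_def)

lemma finite_interferers: "finite (interferers v g c)"
  using finite_card_overlap[OF drift_le_third L_pos] by (simp add: interferers_def)

lemma owner_interferers:
  assumes "h \<in> interferers v g c"
  shows "fst h \<noteq> v" "fst h \<noteq> fst g"
  using assms nb_irrefl by (auto simp: interferers_def overlap_def nbc_def)

lemma interferers_subset_overlapAll: "interferers v g c \<subseteq> overlapAll C s L g"
  by (auto simp: interferers_def overlap_def overlapAll_def)

text \<open>Every other c-neighbour of fst g contributes at most three frames; v itself is one of the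
  at most Dest c-neighbours and contributes none.\<close>

lemma card_interferers_le:
  assumes "nb (fst g) v" "c \<in> span A v (fst g)"
  shows "card (interferers v g c) \<le> 3 * Dest - 3"
proof -
  define W where "W = {w. w \<noteq> v \<and> nbc A nb (fst g) w c}"
  have "W = {w. nbc A nb (fst g) w c} - {v}" "v \<in> {w. nbc A nb (fst g) w c}"
    using assms by (auto simp: W_def nbc_def span_def)
  then have "card W = deg A nb (fst g) c - 1"
    by (simp add: deg_def)
  moreover have "deg A nb (fst g) c \<le> Dest"
    using assms(2) by (intro deg_le_Dest) (simp add: span_def)
  ultimately have "card W \<le> Dest - 1"
    by simp
  have "card (interferers v g c) \<le> (\<Sum>w\<in>W. card (overlap C s L g w))"
    unfolding interferers_def W_def[symmetric] by (rule card_UN_le) simp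
  also have "\<dots> \<le> 3 * card W"
    using sum_mono[of W "\<lambda>w. card (overlap C s L g w)" "\<lambda>_. 3"]
      finite_card_overlap[OF drift_le_third L_pos] by simp
  finally show ?thesis
    using \<open>card W \<le> Dest - 1\<close> by simp
qed

lemma covers_restrict_coverage_frames:
  "covers A nb C s L (restrict \<omega> (coverage_frames f g)) f g \<longleftrightarrow> covers A nb C s L \<omega> f g"
  unfolding covers_iff_interferers by (auto simp: coverage_frames_def)

abbreviation frame_law :: "'n frame \<Rightarrow> ('c \<times> bool) measure" where
  "frame_law \<equiv> \<lambda>f. measure_pmf (frame_pmf A Dest (fst f))"

lemma pred_frame_in:
  assumes "h \<in> J"
  shows "Measurable.pred (Pi\<^sub>M J frame_law) (\<lambda>\<omega>. \<omega> h \<in> S)"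
proof -
  have "{\<omega> \<in> space (Pi\<^sub>M J frame_law). \<omega> h \<in> S} \<in> sets (Pi\<^sub>M J frame_law)"
    using assms by (intro sets_Collect_single) auto
  then show ?thesis
    by (simp add: pred_def)
qed

lemma pred_covers:
  assumes "coverage_frames f g \<subseteq> J"
  shows "Measurable.pred (Pi\<^sub>M J frame_law) (\<lambda>\<omega>. covers A nb C s L \<omega> f g)"
proof -
  have coordinate: "Measurable.pred (Pi\<^sub>M J frame_law) (\<lambda>\<omega>. \<omega> h = x)" if "h \<in> J" for h x
    using pred_frame_in[OF that, of "{x}"] by simp
  show ?thesis
    unfolding covers_iff_interferers using assms finite_channels
    by (intro pred_intros_finite pred_intros_logic coordinate)
      (auto simp: coverage_frames_def span_def finite_interferers)
qed

sublocale Frames: product_prob_space frame_law UNIV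
  by (rule product_prob_spaceI) (rule measure_pmf.prob_space_axioms)

lemma alg_space_eq: "alg_space A Dest = Pi\<^sub>M UNIV frame_law"
  by (simp add: alg_space_def)

lemma prob_covers_eq:
  assumes "fst f \<noteq> fst g"
  shows "measure (alg_space A Dest) {\<omega> \<in> space (alg_space A Dest). covers A nb C s L \<omega> f g} =
    (\<Sum>c\<in>span A (fst f) (fst g). pmf (frame_pmf A Dest (fst f)) (c, True) *
       pmf (frame_pmf A Dest (fst g)) (c, False) *
       (\<Prod>h\<in>interferers (fst f) g c. 1 - pmf (frame_pmf A Dest (fst h)) (c, True)))"
proof -
  let ?P = "Pi\<^sub>M UNIV frame_law"
  define X where "X c h = (if h = f then {(c, True)} else if h = g then {(c, False)} else - {(c, True)})"
    for c :: 'c and h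
  define G where "G c = {\<omega> \<in> space ?P. \<forall>h\<in>insert f (insert g (interferers (fst f) g c)). \<omega> h \<in> X c h}"
    for c
  have distinct: "f \<noteq> g \<and> f \<notin> interferers (fst f) g c \<and> g \<notin> interferers (fst f) g c" for c
    using assms owner_interferers by blast
  have G_iff: "\<omega> \<in> G c \<longleftrightarrow> \<omega> f = (c, True) \<and> \<omega> g = (c, False) \<and>
      (\<forall>h\<in>interferers (fst f) g c. \<omega> h \<noteq> (c, True))" for \<omega> c
    using distinct[of c] by (auto simp: G_def X_def space_PiM)
  have "{\<omega> \<in> space ?P. covers A nb C s L \<omega> f g} = (\<Union>c\<in>span A (fst f) (fst g). G c)"
    by (auto simp: G_iff covers_iff_interferers space_PiM)
  moreover have "G c \<in> sets ?P" for c
  proof -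
    have "Measurable.pred ?P (\<lambda>\<omega>. \<forall>h\<in>insert f (insert g (interferers (fst f) g c)). \<omega> h \<in> X c h)"
      by (intro pred_intros_finite pred_frame_in) (simp_all add: finite_interferers)
    then show ?thesis
      unfolding G_def pred_def .
  qed
  moreover have "disjoint_family_on G (span A (fst f) (fst g))"
    by (auto simp: disjoint_family_on_def G_iff)
  ultimately have "Frames.P.prob {\<omega> \<in> space ?P. covers A nb C s L \<omega> f g} =
      (\<Sum>c\<in>span A (fst f) (fst g). Frames.P.prob (G c))"
    using finite_channels[of "fst g"]
    by (simp add: span_def Frames.P.finite_measure_finite_Union image_subset_iff)
  moreover have "Frames.P.prob (G c) = pmf (frame_pmf A Dest (fst f)) (c, True) *
       pmf (frame_pmf A Dest (fst g)) (c, False) *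
       (\<Prod>h\<in>interferers (fst f) g c. 1 - pmf (frame_pmf A Dest (fst h)) (c, True))" for c
  proof -
    let ?I = "interferers (fst f) g c"
    have "Frames.P.prob (G c) = (\<Prod>h\<in>insert f (insert g ?I). measure (frame_law h) (X c h))"
      unfolding G_def by (rule Frames.measure_PiM_Collect) (simp_all add: finite_interferers)
    also have "\<dots> = measure (frame_law f) (X c f) * (measure (frame_law g) (X c g) *
        (\<Prod>h\<in>?I. measure (frame_law h) (X c h)))"
      using distinct[of c] finite_interferers by simp
    also have "(\<Prod>h\<in>?I. measure (frame_law h) (X c h)) =
        (\<Prod>h\<in>?I. 1 - pmf (frame_pmf A Dest (fst h)) (c, True))"
      by (rule prod.cong) (use distinct[of c] in \<open>auto simp: X_def measure_pmf_Compl_singleton\<close>)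
    finally show ?thesis
      using distinct[of c] by (auto simp: X_def measure_pmf_single)
  qed
  ultimately show ?thesis
    by (simp add: alg_space_eq)
qed

lemma prob_covers_ge:
  assumes nb_gf: "nb (fst g) (fst f)"
  shows "span_ratio A (fst f) (fst g) / (8 * real (max (2 * Smax A) (3 * Dest)))
    \<le> measure (alg_space A Dest) {\<omega> \<in> space (alg_space A Dest). covers A nb C s L \<omega> f g}"
proof -
  define m where "m = real (max (2 * Smax A) (3 * Dest))"
  define n where "n = real (card (A (fst g)))"
  have "0 < m" "0 < n"
    using Dest_pos card_channels_pos by (simp_all add: m_def n_def)
  have channel_ge: "1 / (8 * m * n) \<le> pmf (frame_pmf A Dest (fst f)) (c, True) *
      pmf (frame_pmf A Dest (fst g)) (c, False) *
      (\<Prod>h\<in>interferers (fst f) g c. 1 - pmf (frame_pmf A Dest (fst h)) (c, True))"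
    if c: "c \<in> span A (fst f) (fst g)" for c
  proof -
    have "1 / m \<le> pmf (frame_pmf A Dest (fst f)) (c, True)"
      using c pmf_transmit_ge by (simp add: m_def span_def)
    moreover have "1 / (2 * n) \<le> pmf (frame_pmf A Dest (fst g)) (c, False)"
      using c pmf_listen_ge by (simp add: n_def span_def)
    moreover have "1/4 \<le> (\<Prod>h\<in>interferers (fst f) g c. 1 - pmf (frame_pmf A Dest (fst h)) (c, True))"
      using card_interferers_le[OF nb_gf] c Dest_pos pmf_transmit_le
      by (intro prod_one_minus_ge_quarter finite_interferers) (auto simp: span_def Int_commute)
    ultimately have "1 / m * (1 / (2 * n)) * (1/4) \<le> pmf (frame_pmf A Dest (fst f)) (c, True) *
        pmf (frame_pmf A Dest (fst g)) (c, False) *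
        (\<Prod>h\<in>interferers (fst f) g c. 1 - pmf (frame_pmf A Dest (fst h)) (c, True))"
      using \<open>0 < m\<close> \<open>0 < n\<close> by (intro mult_mono) auto
    then show ?thesis
      by (simp add: field_simps)
  qed
  have "fst f \<noteq> fst g"
    using nb_gf nb_irrefl by metis
  have "span_ratio A (fst f) (fst g) / (8 * m) = (\<Sum>c\<in>span A (fst f) (fst g). 1 / (8 * m * n))"
    by (simp add: span_ratio_def n_def span_def Int_commute field_simps)
  also have "\<dots> \<le> measure (alg_space A Dest) {\<omega> \<in> space (alg_space A Dest). covers A nb C s L \<omega> f g}"
    unfolding prob_covers_eq[OF \<open>fst f \<noteq> fst g\<close>] by (rule sum_mono) (rule channel_ge)
  finally show ?thesis
    by (simp add: m_def)
qed

lemma admissible_coverage_frames_disjoint: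
  assumes adm: "admissible C s L v u \<sigma> M" and "v \<noteq> u"
  shows "disjoint_family_on (\<lambda>k. coverage_frames (fst (\<sigma> k)) (snd (\<sigma> k))) {..<M}"
proof -
  define F where "F k = {fst (\<sigma> k), snd (\<sigma> k)} \<union>
      {h \<in> overlapAll C s L (snd (\<sigma> k)). fst h \<noteq> v \<and> fst h \<noteq> u}" for k
  have coverage_frames_subset: "coverage_frames (fst (\<sigma> k)) (snd (\<sigma> k)) \<subseteq> F k" if "k < M" for k
  proof -
    have owners: "fst (fst (\<sigma> k)) = v" "fst (snd (\<sigma> k)) = u"
      using admissible_owners[OF adm that] by simp_all
    have "interferers v (snd (\<sigma> k)) c \<subseteq> F k" for c
      using owner_interferers[of _ v "snd (\<sigma> k)" c] interferers_subset_overlapAll[of v "snd (\<sigma> k)" c]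
      unfolding F_def owners(2) by blast
    then show ?thesis
      unfolding coverage_frames_def owners(1) by (auto simp: F_def)
  qed
  have "F k \<inter> F l = {}" if "k < l" "l < M" for k l
  proof -
    have "fst (fst (\<sigma> k)) = v" "fst (snd (\<sigma> k)) = u" "fst (fst (\<sigma> l)) = v" "fst (snd (\<sigma> l)) = u"
      using admissible_owners[OF adm] that by simp_all
    moreover have "fst (\<sigma> k) \<noteq> fst (\<sigma> l)" "snd (\<sigma> k) \<noteq> snd (\<sigma> l)"
      using admissible_indices_increasing[OF adm that] by auto
    ultimately show ?thesis
      using admissible_overlapAll_disjoint[OF L_pos adm that] \<open>v \<noteq> u\<close> unfolding F_def by auto
  qed
  then have "F k \<inter> F l = {}" if "k \<in> {..<M}" "l \<in> {..<M}" "k \<noteq> l" for k l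
    using that by (cases k l rule: linorder_cases) (auto simp: Int_commute)
  then show ?thesis
    using coverage_frames_subset by (fastforce simp: disjoint_family_on_def)
qed

lemma prob_not_seq_covers_le:
  assumes adm: "admissible C s L v u \<sigma> M" and link: "neighbors A nb v u"
  defines "E \<equiv> {\<omega> \<in> space (alg_space A Dest). \<not> seq_covers A nb C s L \<omega> \<sigma> M}"
  shows "E \<in> sets (alg_space A Dest)"
    and "measure (alg_space A Dest) E \<le> (1 - rho A nb / (8 * real (max (2 * Smax A) (3 * Dest)))) ^ M"
proof -
  let ?P = "Pi\<^sub>M UNIV frame_law"
  let ?q = "rho A nb / (8 * real (max (2 * Smax A) (3 * Dest)))"
  define covers_k where "covers_k k \<omega> \<longleftrightarrow> covers A nb C s L \<omega> (fst (\<sigma> k)) (snd (\<sigma> k))" for k \<omega>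
  have "nb u v" "v \<noteq> u"
    using link nb_sym nb_irrefl by (auto simp: neighbors_def nbc_def)
  have pred: "Measurable.pred ?P (covers_k k)" for k
    unfolding covers_k_def by (rule pred_covers) simp
  have E_eq: "E = {\<omega> \<in> space ?P. \<forall>k\<in>{..<M}. \<not> covers_k k \<omega>}"
    by (auto simp: E_def seq_covers_def covers_k_def alg_space_eq)
  then show "E \<in> sets (alg_space A Dest)"
    using pred by (simp add: alg_space_eq pred_def[symmetric])
  have "measure ?P E = (\<Prod>k\<in>{..<M}. measure ?P {\<omega> \<in> space ?P. \<not> covers_k k \<omega>})"
    unfolding E_eq
  proof (rule Frames.measure_PiM_none_of_local_events)
    show "disjoint_family_on (\<lambda>k. coverage_frames (fst (\<sigma> k)) (snd (\<sigma> k))) {..<M}"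
      using admissible_coverage_frames_disjoint[OF adm \<open>v \<noteq> u\<close>] .
  qed (simp_all add: covers_k_def covers_restrict_coverage_frames pred_covers)
  also have "\<dots> \<le> (\<Prod>k\<in>{..<M}. 1 - ?q)"
  proof (rule prod_mono)
    fix k assume "k \<in> {..<M}"
    then have "fst (fst (\<sigma> k)) = v" "fst (snd (\<sigma> k)) = u"
      using admissible_owners[OF adm] by auto
    then have "?q \<le> measure ?P {\<omega> \<in> space ?P. covers_k k \<omega>}"
      using prob_covers_ge[of "snd (\<sigma> k)" "fst (\<sigma> k)"] rho_pos_le_span_ratio(2)[OF link] \<open>nb u v\<close>
        Dest_pos by (auto simp: covers_k_def alg_space_eq intro: order_trans[OF divide_right_mono])
    then show "0 \<le> measure ?P {\<omega> \<in> space ?P. \<not> covers_k k \<omega>} \<and>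
        measure ?P {\<omega> \<in> space ?P. \<not> covers_k k \<omega>} \<le> 1 - ?q"
      using Frames.P.prob_neg[of "covers_k k"] pred[of k] by (simp add: pred_def)
  qed
  finally show "measure (alg_space A Dest) E \<le> (1 - ?q) ^ M"
    by (simp add: alg_space_eq)
qed

end

theorem mainTheorem3:
  fixes A :: "'n::finite \<Rightarrow> 'c set"
    and nb :: "'n \<Rightarrow> 'n \<Rightarrow> bool"
    and C :: "'n \<Rightarrow> real \<Rightarrow> real"
    and \<delta> :: real
    and s :: "'n \<Rightarrow> real"
    and L :: real
    and Dest :: nat
    and \<epsilon> :: real
    and v u :: 'n
    and \<sigma> :: "nat \<Rightarrow> 'n frame \<times> 'n frame"
    and M :: nat
  assumes chans: "\<forall>w. finite (A w) \<and> A w \<noteq> {}"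
    and nb_sym: "\<forall>w x. nb w x \<longleftrightarrow> nb x w"
    and nb_irrefl: "\<forall>w. \<not> nb w w"
    and clocks: "\<forall>w t dt. dt \<ge> 0 \<longrightarrow>
        (1 - \<delta>) * dt \<le> C w (t + dt) - C w t \<and> C w (t + dt) - C w t \<le> (1 + \<delta>) * dt"
    and delta_le: "\<delta> \<le> 1/7"
    and L_pos: "L > 0"
    and Dest_pos: "Dest > 0"
    and Dest_ge: "Dest \<ge> Delta A nb"
    and eps: "0 < \<epsilon>" "\<epsilon> < 1"
    and link: "neighbors A nb v u"
    and M_def: "M = nat \<lceil>8 * real (max (2 * Smax A) (3 * Dest)) / rho A nb
                          * ln (real CARD('n) ^ 2 / \<epsilon>)\<rceil>"
    and adm: "admissible C s L v u \<sigma> M"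
  shows "{\<omega> \<in> space (alg_space A Dest). \<not> seq_covers A nb C s L \<omega> \<sigma> M} \<in> sets (alg_space A Dest) \<and>
         measure (alg_space A Dest) {\<omega> \<in> space (alg_space A Dest). \<not> seq_covers A nb C s L \<omega> \<sigma> M}
           \<le> \<epsilon> / real CARD('n) ^ 2"
proof -
  interpret algorithm1 C \<delta> A nb s L Dest
    by unfold_locales (use chans nb_sym nb_irrefl clocks delta_le L_pos Dest_pos Dest_ge in auto)
  define q where "q = rho A nb / (8 * real (max (2 * Smax A) (3 * Dest)))"
  have "0 \<le> q" "q \<le> 1"
    using rho_pos_le_span_ratio[OF link] span_ratio_le_1[of v u] Dest_pos
    by (auto simp: q_def field_simps)
  have "ln (real CARD('n) ^ 2 / \<epsilon>) \<le> q * real M"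
  proof -
    have "ln (real CARD('n) ^ 2 / \<epsilon>) = q * (8 * real (max (2 * Smax A) (3 * Dest)) / rho A nb
        * ln (real CARD('n) ^ 2 / \<epsilon>))"
      using rho_pos_le_span_ratio(1)[OF link] Dest_pos by (simp add: q_def)
    also have "\<dots> \<le> q * real M"
      unfolding M_def using \<open>0 \<le> q\<close> by (intro mult_left_mono real_nat_ceiling_ge)
    finally show ?thesis .
  qed
  then have "(1 - q) ^ M \<le> 1 / (real CARD('n) ^ 2 / \<epsilon>)"
    using eps by (intro power_one_minus_le_inverse \<open>0 \<le> q\<close> \<open>q \<le> 1\<close>) simp_all
  then show ?thesis
    using prob_not_seq_covers_le[OF adm link] by (simp add: q_def)
qed

end
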